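(* Under the setting below, suppose that (P) is feasible for some $\gamma>1$ and that $m>0$ and $G^a>0$ entrywise for all $a$. Let $\bar\gamma_N$ denote the supremum of the values $\gamma>1$ for which (P) is feasible. Then for any $\gamma\in[1,\bar\gamma_N)$ there exist a solution $\theta$ of (P) and a solution $V$ of (D), and at these solutions: (1) for each $j=1,\dots,N-1$ there exists at least one $a_j\in\{1,\dots,M\}$ such that $[V]_j=\gamma[P^1_{T_{a_j}}V]_j+[G^{a_j}]_j$ and $[\theta^{a_j}]_j>0$; (2) there exists a solution $\tilde\theta$ of (P) such that for each $j=1,\dots,N-1$ there is exactly one $a_j\in\{1,\dots,M\}$ with $[\tilde\theta^{a_j}]_j>0$ and $[\tilde\theta^{a'}]_j=0$ for all $a'\ne a_j$.
   Context: Finite-dimensional setting: $\mathcal{X}_N=\{D_1,\dots,D_N\}$ is a finite partition of a compact state space $X\subset\mathbb{R}^q$ with the attractor set $\mathcal{A}\subseteq D_N$; $\mathcal{U}_M=\{u^1,\dots,u^M\}$ is a finite set of control values; $\{\xi^1,\dots,\xi^L\}$ is a finite set of uncertainty values with probabilities $v^1,\dots,v^L\ge0$, $\sum_\ell v^\ell=1$. For the system $x_{n+1}=T(x_n,u_n,\xi_n)$, let $T_{u^a,\xi^\ell}=T(\cdot,u^a,\xi^\ell):X\to X$ and define the $N\times N$ Markov matrix $P_{T_{a,\ell}}$ by $[P_{T_{a,\ell}}]_{ij}=m_L(T_{u^a,\xi^\ell}^{-1}(D_j)\cap D_i)/m_L(D_i)$, $m_L$ the Lebesgue measure. Set $P_{T_a}=\sum_{\ell=1}^L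 v^\ell P_{T_{a,\ell}}$ and let $P^1_{T_a}\in\mathbb{R}^{(N-1)\times(N-1)}$ be the submatrix of its first $N-1$ rows and columns. Let $G^{a,\ell}\in\mathbb{R}^{N-1}$ be given cost vectors ($[G^{a,\ell}]_j$ is the cost of using $u^a$ on $D_j$ with uncertainty $\xi^\ell$) and $G^a=\sum_\ell v^\ell G^{a,\ell}$. Let $m\in\mathbb{R}^{N-1}$ be a given vector. Prime denotes transpose. Primal LP (P): minimize $\sum_{a=1}^M (G^a)'\theta^a$ over $\theta^1,\dots,\theta^M\in\mathbb{R}^{N-1}$, $\theta^a\ge0$, subject to $\gamma\sum_{a=1}^M(P^1_{T_a})'\theta^a-\sum_{a=1}^M\theta^a=-m$. Dual LP (D): maximize $m'V$ over $V\in\mathbb{R}^{N-1}$ subject to $V\le\gamma P^1_{T_a}V+G^a$ (entrywise) for all $a=1,\dots,M$. *)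

theory Defs
  imports "HOL-Analysis.Analysis"
begin

text \<open>Indices are 1-based as in the paper: cells i = 1..N, controls a = 1..M,
  uncertainties l = 1..L. Vectors in R^(N-1) are functions nat => real read on 1..N-1.\<close>

definition markov_al ::
  "('x::euclidean_space \<Rightarrow> 'u \<Rightarrow> 'e \<Rightarrow> 'x) \<Rightarrow> (nat \<Rightarrow> 'x set) \<Rightarrow> (nat \<Rightarrow> 'u) \<Rightarrow> (nat \<Rightarrow> 'e)
    \<Rightarrow> nat \<Rightarrow> nat \<Rightarrow> nat \<Rightarrow> nat \<Rightarrow> real" where
  "markov_al T D u \<xi> a l i j =
     measure lebesgue ((\<lambda>x. T x (u a) (\<xi> l)) -` D j \<inter> D i) / measure lebesgue (D i)"

text \<open>P_{T_a} = sum_l v^l P_{T_{a,l}}; entry (i,j). P^1_{T_a} is its restriction to i,j \<le> N-1.\<close>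
definition markov_a ::
  "('x::euclidean_space \<Rightarrow> 'u \<Rightarrow> 'e \<Rightarrow> 'x) \<Rightarrow> (nat \<Rightarrow> 'x set) \<Rightarrow> (nat \<Rightarrow> 'u) \<Rightarrow> (nat \<Rightarrow> 'e)
    \<Rightarrow> (nat \<Rightarrow> real) \<Rightarrow> nat \<Rightarrow> nat \<Rightarrow> nat \<Rightarrow> nat \<Rightarrow> real" where
  "markov_a T D u \<xi> v L a i j = (\<Sum>l = 1..L. v l * markov_al T D u \<xi> a l i j)"

definition cost_a :: "(nat \<Rightarrow> nat \<Rightarrow> nat \<Rightarrow> real) \<Rightarrow> (nat \<Rightarrow> real) \<Rightarrow> nat \<Rightarrow> nat \<Rightarrow> nat \<Rightarrow> real" where
  "cost_a G v L a j = (\<Sum>l = 1..L. v l * G a l j)"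

text \<open>Generic LP pair. P a i j = [P^1_{T_a}]_{ij}, Ga a j = [G^a]_j, n = N-1,
  theta a j = [theta^a]_j.\<close>
definition primal_feasible ::
  "nat \<Rightarrow> nat \<Rightarrow> (nat \<Rightarrow> nat \<Rightarrow> nat \<Rightarrow> real) \<Rightarrow> real \<Rightarrow> (nat \<Rightarrow> real) \<Rightarrow> (nat \<Rightarrow> nat \<Rightarrow> real) \<Rightarrow> bool" where
  "primal_feasible M n P \<gamma> m \<theta> \<longleftrightarrow>
     (\<forall>a\<in>{1..M}. \<forall>j\<in>{1..n}. 0 \<le> \<theta> a j) \<and>
     (\<forall>j\<in>{1..n}. \<gamma> * (\<Sum>a = 1..M. \<Sum>i = 1..n. P a i j * \<theta> a i) - (\<Sum>a = 1..M. \<theta> a j) = - m j)"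

definition primal_obj :: "nat \<Rightarrow> nat \<Rightarrow> (nat \<Rightarrow> nat \<Rightarrow> real) \<Rightarrow> (nat \<Rightarrow> nat \<Rightarrow> real) \<Rightarrow> real" where
  "primal_obj M n Ga \<theta> = (\<Sum>a = 1..M. \<Sum>j = 1..n. Ga a j * \<theta> a j)"

definition primal_solution ::
  "nat \<Rightarrow> nat \<Rightarrow> (nat \<Rightarrow> nat \<Rightarrow> nat \<Rightarrow> real) \<Rightarrow> (nat \<Rightarrow> nat \<Rightarrow> real) \<Rightarrow> real \<Rightarrow> (nat \<Rightarrow> real)
     \<Rightarrow> (nat \<Rightarrow> nat \<Rightarrow> real) \<Rightarrow> bool" where
  "primal_solution M n P Ga \<gamma> m \<theta> \<longleftrightarrow> primal_feasible M n P \<gamma> m \<theta> \<and>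
     (\<forall>\<theta>'. primal_feasible M n P \<gamma> m \<theta>' \<longrightarrow> primal_obj M n Ga \<theta> \<le> primal_obj M n Ga \<theta>')"

definition dual_feasible ::
  "nat \<Rightarrow> nat \<Rightarrow> (nat \<Rightarrow> nat \<Rightarrow> nat \<Rightarrow> real) \<Rightarrow> (nat \<Rightarrow> nat \<Rightarrow> real) \<Rightarrow> real \<Rightarrow> (nat \<Rightarrow> real) \<Rightarrow> bool" where
  "dual_feasible M n P Ga \<gamma> V \<longleftrightarrow>
     (\<forall>a\<in>{1..M}. \<forall>j\<in>{1..n}. V j \<le> \<gamma> * (\<Sum>i = 1..n. P a j i * V i) + Ga a j)"

definition dual_solution ::
  "nat \<Rightarrow> nat \<Rightarrow> (nat \<Rightarrow> nat \<Rightarrow> nat \<Rightarrow> real) \<Rightarrow> (nat \<Rightarrow> nat \<Rightarrow> real) \<Rightarrow> real \<Rightarrow> (nat \<Rightarrow> real)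
     \<Rightarrow> (nat \<Rightarrow> real) \<Rightarrow> bool" where
  "dual_solution M n P Ga \<gamma> m V \<longleftrightarrow> dual_feasible M n P Ga \<gamma> V \<and>
     (\<forall>V'. dual_feasible M n P Ga \<gamma> V' \<longrightarrow> (\<Sum>j = 1..n. m j * V' j) \<le> (\<Sum>j = 1..n. m j * V j))"

end

theory Submission
  imports Defs
begin

text \<open>The primal cost of any feasible \<theta> equals m'V plus the pairing of \<theta> with the reduced
  costs G^a + \<gamma> P^1_{T_a} V - V; this gives weak duality and complementary slackness. For a
  deterministic policy \<sigma> the flow equation x = m + \<gamma> P_\<sigma>' x and the value equation
  V = G_\<sigma> + \<gamma> P_\<sigma> V are adjoint, and a nonnegative solution of one is an excessive weight
  that bounds all nonnegative subsolutions of the other, so by a monotone fixed point argument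
  both are solvable as soon as one of them is. Feasibility at some \<gamma>' \<ge> \<gamma> produces a first such policy, acting greedily with respect
  to the value of the randomized policy encoded by a feasible \<theta>. Among the finitely many
  admissible deterministic policies take one of least cost m'V: its value V has nonnegative
  reduced costs, since otherwise changing a single action gives an admissible policy of smaller
  cost. So V is dual feasible with the same objective as the deterministic flow of the policy,
  which is therefore an optimal solution of (P) with one action per cell.\<close>

lemma monotone_nonneg_fixpoint:
  fixes F :: "('i \<Rightarrow> real) \<Rightarrow> 'i \<Rightarrow> real" and I :: "'i set" and z :: "'i \<Rightarrow> real"
  assumes mono: "\<And>y y'. \<forall>i\<in>I. 0 \<le> y i \<and> y i \<le> y' i \<Longrightarrow> \<forall>i\<in>I. F y i \<le> F y' i"
    and nonneg: "\<And>y. \<forall>i\<in>I. 0 \<le> y i \<Longrightarrow> \<forall>i\<in>I. 0 \<le> F y i"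
    and bounded: "\<And>y. \<forall>i\<in>I. 0 \<le> y i \<and> y i \<le> F y i \<Longrightarrow> \<forall>i\<in>I. y i \<le> z i"
  shows "\<exists>y. \<forall>i\<in>I. 0 \<le> y i \<and> y i = F y i"
proof -
  define A where "A = {y. \<forall>i\<in>I. 0 \<le> y i \<and> y i \<le> F y i}"
  define s where "s = (\<lambda>i. SUP y\<in>A. y i)"
  have s_eq: "s i = (SUP y\<in>A. y i)" for i by (simp add: s_def)
  have zero_in_A: "(\<lambda>_. 0) \<in> A"
    using nonneg[of "\<lambda>_. 0"] by (auto simp: A_def)
  have le_s: "y i \<le> s i" if "y \<in> A" "i \<in> I" for y i
    unfolding s_eq using that bounded
    by (intro cSUP_upper bdd_aboveI2[where M = "z i"]) (auto simp: A_def)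
  have s_nonneg: "\<forall>i\<in>I. 0 \<le> s i"
    using le_s[OF zero_in_A] by simp
  have le_F_s: "y i \<le> F s i" if "y \<in> A" "i \<in> I" for y i
  proof -
    have "y i \<le> F y i" using that by (auto simp: A_def)
    also have "F y i \<le> F s i" using mono[of y s] le_s that by (auto simp: A_def)
    finally show ?thesis .
  qed
  have s_le_F_s: "\<forall>i\<in>I. s i \<le> F s i"
  proof
    fix i assume "i \<in> I"
    then have "(SUP y\<in>A. y i) \<le> F s i"
      using zero_in_A le_F_s by (auto intro!: cSUP_least)
    then show "s i \<le> F s i" using s_eq[of i] by simp
  qed
  then have "F s \<in> A"
    using nonneg[OF s_nonneg] mono[of s "F s"] s_nonneg by (auto simp: A_def)
  then show ?thesis
    using le_s s_nonneg s_le_F_s by (intro exI[of _ s]) (auto intro: antisym)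
qed

lemma nonneg_linear_fixpoint_if_excessive:
  fixes I :: "'i set" and Q :: "'i \<Rightarrow> 'i \<Rightarrow> real" and b g w :: "'i \<Rightarrow> real"
  assumes "finite I"
    and Q_nonneg: "\<And>i k. i \<in> I \<Longrightarrow> k \<in> I \<Longrightarrow> 0 \<le> Q i k"
    and b_nonneg: "\<And>i. i \<in> I \<Longrightarrow> 0 \<le> b i"
    and w_nonneg: "\<And>i. i \<in> I \<Longrightarrow> 0 \<le> w i"
    and g_pos: "\<And>k. k \<in> I \<Longrightarrow> 0 < g k"
    and excessive: "\<And>k. k \<in> I \<Longrightarrow> g k + (\<Sum>i\<in>I. Q i k * w i) \<le> w k"
  shows "\<exists>y. \<forall>i\<in>I. 0 \<le> y i \<and> y i = b i + (\<Sum>k\<in>I. Q i k * y k)"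
proof (rule monotone_nonneg_fixpoint[where z = "\<lambda>k. (\<Sum>i\<in>I. w i * b i) / g k"])
  fix y y' :: "'i \<Rightarrow> real"
  assume "\<forall>i\<in>I. 0 \<le> y i \<and> y i \<le> y' i"
  then show "\<forall>i\<in>I. b i + (\<Sum>k\<in>I. Q i k * y k) \<le> b i + (\<Sum>k\<in>I. Q i k * y' k)"
    using Q_nonneg by (auto intro!: sum_mono mult_left_mono)
next
  fix y :: "'i \<Rightarrow> real"
  assume "\<forall>i\<in>I. 0 \<le> y i"
  then show "\<forall>i\<in>I. 0 \<le> b i + (\<Sum>k\<in>I. Q i k * y k)"
    using Q_nonneg b_nonneg by (auto intro!: add_nonneg_nonneg sum_nonneg)
next
  fix y :: "'i \<Rightarrow> real"
  assume sub: "\<forall>i\<in>I. 0 \<le> y i \<and> y i \<le> b i + (\<Sum>k\<in>I. Q i k * y k)"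
  \<comment> \<open>Pairing the subsolution y with the excessive weight w gives the a priori bound.\<close>
  have swap: "(\<Sum>k\<in>I. (\<Sum>i\<in>I. Q i k * w i) * y k) = (\<Sum>i\<in>I. w i * (\<Sum>k\<in>I. Q i k * y k))"
    unfolding sum_distrib_left sum_distrib_right by (subst sum.swap) (simp add: mult_ac)
  have "(\<Sum>k\<in>I. g k * y k) \<le> (\<Sum>k\<in>I. (w k - (\<Sum>i\<in>I. Q i k * w i)) * y k)"
    using sub excessive by (intro sum_mono mult_right_mono) (auto simp: algebra_simps)
  also have "\<dots> = (\<Sum>k\<in>I. w k * y k) - (\<Sum>i\<in>I. w i * (\<Sum>k\<in>I. Q i k * y k))"
    by (simp add: left_diff_distrib sum_subtractf swap)
  also have "\<dots> \<le> (\<Sum>k\<in>I. w k * y k) - (\<Sum>i\<in>I. w i * (y i - b i))"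
    using sub w_nonneg by (intro diff_left_mono sum_mono mult_left_mono) (auto simp: algebra_simps)
  also have "\<dots> = (\<Sum>i\<in>I. w i * b i)"
    by (simp add: algebra_simps sum_subtractf)
  finally have weighted: "(\<Sum>k\<in>I. g k * y k) \<le> (\<Sum>i\<in>I. w i * b i)" .
  show "\<forall>k\<in>I. y k \<le> (\<Sum>i\<in>I. w i * b i) / g k"
  proof
    fix k assume k: "k \<in> I"
    have "g k * y k \<le> (\<Sum>k\<in>I. g k * y k)"
      using k \<open>finite I\<close> sub g_pos by (intro member_le_sum) (auto intro: mult_nonneg_nonneg less_imp_le)
    with weighted g_pos[OF k] show "y k \<le> (\<Sum>i\<in>I. w i * b i) / g k"
      by (simp add: pos_le_divide_eq mult.commute)
  qed
qed

lemma nonneg_scaled_linear_fixpoint_if_excessive: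
  fixes I :: "'i set" and R :: "'i \<Rightarrow> 'i \<Rightarrow> real" and B X g :: "'i \<Rightarrow> real"
  assumes "finite I"
    and R_nonneg: "\<And>i k. i \<in> I \<Longrightarrow> k \<in> I \<Longrightarrow> 0 \<le> R i k"
    and B_nonneg: "\<And>i. i \<in> I \<Longrightarrow> 0 \<le> B i"
    and X_pos: "\<And>i. i \<in> I \<Longrightarrow> 0 < X i"
    and g_pos: "\<And>k. k \<in> I \<Longrightarrow> 0 < g k"
    and excessive: "\<And>k. k \<in> I \<Longrightarrow> g k + (\<Sum>i\<in>I. R i k) \<le> X k"
  shows "\<exists>y. \<forall>i\<in>I. 0 \<le> y i \<and> X i * y i = B i + (\<Sum>k\<in>I. R i k * y k)"
proof -
  have X_nz: "X i \<noteq> 0" if "i \<in> I" for i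
    using X_pos[OF that] by simp
  have "\<exists>y. \<forall>i\<in>I. 0 \<le> y i \<and> y i = B i / X i + (\<Sum>k\<in>I. R i k / X i * y k)"
  proof (rule nonneg_linear_fixpoint_if_excessive[OF \<open>finite I\<close>, where w = X and g = g])
    show "g k + (\<Sum>i\<in>I. R i k / X i * X i) \<le> X k" if "k \<in> I" for k
      using excessive[OF that] X_nz by (simp cong: sum.cong)
  qed (use R_nonneg B_nonneg X_pos g_pos in \<open>auto intro: less_imp_le divide_nonneg_pos\<close>)
  then obtain y where y: "\<forall>i\<in>I. 0 \<le> y i \<and> y i = B i / X i + (\<Sum>k\<in>I. R i k / X i * y k)" ..
  have "X i * y i = B i + (\<Sum>k\<in>I. R i k * y k)" if "i \<in> I" for i
  proof -
    have "X i * y i = X i * (B i / X i + (\<Sum>k\<in>I. R i k / X i * y k))"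
      using y that by simp
    also have "\<dots> = B i + (\<Sum>k\<in>I. R i k * y k)"
      using X_nz[OF that] by (simp add: distrib_left sum_distrib_left)
    finally show ?thesis .
  qed
  then show ?thesis
    using y by blast
qed

lemma primal_feasible_nonneg:
  "primal_feasible M n P c m \<theta> \<Longrightarrow> a \<in> {1..M} \<Longrightarrow> j \<in> {1..n} \<Longrightarrow> 0 \<le> \<theta> a j"
  unfolding primal_feasible_def by blast

locale discounted_lp =
  fixes M n :: nat and P :: "nat \<Rightarrow> nat \<Rightarrow> nat \<Rightarrow> real" and Ga :: "nat \<Rightarrow> nat \<Rightarrow> real"
    and m :: "nat \<Rightarrow> real" and \<gamma> :: real
  assumes P_nonneg: "\<And>a i j. a \<in> {1..M} \<Longrightarrow> i \<in> {1..n} \<Longrightarrow> j \<in> {1..n} \<Longrightarrow> 0 \<le> P a i j"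
    and Ga_pos: "\<And>a j. a \<in> {1..M} \<Longrightarrow> j \<in> {1..n} \<Longrightarrow> 0 < Ga a j"
    and m_pos: "\<And>j. j \<in> {1..n} \<Longrightarrow> 0 < m j"
    and \<gamma>_nonneg: "0 \<le> \<gamma>"
begin

definition reduced_cost :: "(nat \<Rightarrow> real) \<Rightarrow> nat \<Rightarrow> nat \<Rightarrow> real" where
  "reduced_cost V a j = Ga a j + \<gamma> * (\<Sum>i=1..n. P a j i * V i) - V j"

lemma dual_feasible_iff_reduced_cost_nonneg:
  "dual_feasible M n P Ga \<gamma> V \<longleftrightarrow> (\<forall>a\<in>{1..M}. \<forall>j\<in>{1..n}. 0 \<le> reduced_cost V a j)"
proof -
  have "0 \<le> reduced_cost V a j \<longleftrightarrow> V j \<le> \<gamma> * (\<Sum>i=1..n. P a j i * V i) + Ga a j" for a j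
    unfolding reduced_cost_def by linarith
  then show ?thesis
    unfolding dual_feasible_def by simp
qed

lemma primal_obj_eq_lagrangian:
  assumes "primal_feasible M n P \<gamma> m \<theta>"
  shows "primal_obj M n Ga \<theta>
    = (\<Sum>j=1..n. m j * V j) + (\<Sum>a=1..M. \<Sum>j=1..n. \<theta> a j * reduced_cost V a j)"
proof -
  have m_eq: "m j = (\<Sum>a=1..M. \<theta> a j) - \<gamma> * (\<Sum>a=1..M. \<Sum>i=1..n. P a i j * \<theta> a i)"
    if "j \<in> {1..n}" for j
    using assms that unfolding primal_feasible_def by force
  have "(\<Sum>j=1..n. m j * V j) = (\<Sum>j=1..n. (\<Sum>a=1..M. \<theta> a j) * V j)
      - \<gamma> * (\<Sum>j=1..n. (\<Sum>a=1..M. \<Sum>i=1..n. P a i j * \<theta> a i) * V j)"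
  proof -
    have "(\<Sum>j=1..n. m j * V j) = (\<Sum>j=1..n. (\<Sum>a=1..M. \<theta> a j) * V j
        - \<gamma> * ((\<Sum>a=1..M. \<Sum>i=1..n. P a i j * \<theta> a i) * V j))"
      by (rule sum.cong) (simp_all add: m_eq algebra_simps)
    then show ?thesis by (simp add: sum_subtractf sum_distrib_left)
  qed
  also have "(\<Sum>j=1..n. (\<Sum>a=1..M. \<theta> a j) * V j) = (\<Sum>a=1..M. \<Sum>j=1..n. \<theta> a j * V j)"
    unfolding sum_distrib_right by (rule sum.swap)
  also have "(\<Sum>j=1..n. (\<Sum>a=1..M. \<Sum>i=1..n. P a i j * \<theta> a i) * V j)
      = (\<Sum>a=1..M. \<Sum>j=1..n. \<Sum>i=1..n. P a i j * \<theta> a i * V j)"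
    unfolding sum_distrib_right by (rule sum.swap)
  also have "\<dots> = (\<Sum>a=1..M. \<Sum>i=1..n. \<Sum>j=1..n. P a i j * \<theta> a i * V j)"
    by (rule sum.cong[OF refl], rule sum.swap)
  also have "\<dots> = (\<Sum>a=1..M. \<Sum>j=1..n. \<theta> a j * (\<Sum>i=1..n. P a j i * V i))"
    by (simp add: sum_distrib_left mult.assoc mult.left_commute)
  finally have dual_obj: "(\<Sum>j=1..n. m j * V j) = (\<Sum>a=1..M. \<Sum>j=1..n. \<theta> a j * V j)
      - \<gamma> * (\<Sum>a=1..M. \<Sum>j=1..n. \<theta> a j * (\<Sum>i=1..n. P a j i * V i))" .
  have "(\<Sum>a=1..M. \<Sum>j=1..n. \<theta> a j * reduced_cost V a j)
     = primal_obj M n Ga \<theta> + \<gamma> * (\<Sum>a=1..M. \<Sum>j=1..n. \<theta> a j * (\<Sum>i=1..n. P a j i * V i))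
       - (\<Sum>a=1..M. \<Sum>j=1..n. \<theta> a j * V j)"
    unfolding primal_obj_def reduced_cost_def
    by (simp add: algebra_simps sum.distrib sum_subtractf sum_distrib_left)
  with dual_obj show ?thesis by simp
qed

lemma weak_duality:
  assumes "dual_feasible M n P Ga \<gamma> V" "primal_feasible M n P \<gamma> m \<theta>"
  shows "(\<Sum>j=1..n. m j * V j) \<le> primal_obj M n Ga \<theta>"
proof -
  have "0 \<le> (\<Sum>a=1..M. \<Sum>j=1..n. \<theta> a j * reduced_cost V a j)"
    using assms unfolding dual_feasible_iff_reduced_cost_nonneg primal_feasible_def
    by (intro sum_nonneg mult_nonneg_nonneg) auto
  then show ?thesis
    using primal_obj_eq_lagrangian[OF assms(2), of V] by linarith
qed

lemma solutions_if_objectives_agree: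
  assumes "primal_feasible M n P \<gamma> m \<theta>" "dual_feasible M n P Ga \<gamma> V"
    and "primal_obj M n Ga \<theta> = (\<Sum>j=1..n. m j * V j)"
  shows "primal_solution M n P Ga \<gamma> m \<theta>" and "dual_solution M n P Ga \<gamma> m V"
  using assms weak_duality[OF assms(2)] weak_duality[OF _ assms(1)]
  unfolding primal_solution_def dual_solution_def by auto

lemma objectives_agree_if_solutions:
  assumes "primal_solution M n P Ga \<gamma> m \<theta>" "dual_solution M n P Ga \<gamma> m V"
    and "primal_feasible M n P \<gamma> m \<theta>'" "dual_feasible M n P Ga \<gamma> V'"
    and "primal_obj M n Ga \<theta>' = (\<Sum>j=1..n. m j * V' j)"
  shows "primal_obj M n Ga \<theta> = (\<Sum>j=1..n. m j * V j)"
proof -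
  have "primal_obj M n Ga \<theta> \<le> primal_obj M n Ga \<theta>'" "(\<Sum>j=1..n. m j * V' j) \<le> (\<Sum>j=1..n. m j * V j)"
    using assms(1-4) unfolding primal_solution_def dual_solution_def by auto
  moreover have "(\<Sum>j=1..n. m j * V j) \<le> primal_obj M n Ga \<theta>"
    using assms(1,2) weak_duality unfolding primal_solution_def dual_solution_def by blast
  ultimately show ?thesis
    using assms(5) by linarith
qed

lemma m_le_total_flow:
  assumes "primal_feasible M n P c m \<theta>" "0 \<le> c" "j \<in> {1..n}"
  shows "m j \<le> (\<Sum>a=1..M. \<theta> a j)"
proof -
  have "0 \<le> c * (\<Sum>a=1..M. \<Sum>i=1..n. P a i j * \<theta> a i)"
    using assms P_nonneg unfolding primal_feasible_def
    by (intro mult_nonneg_nonneg sum_nonneg) auto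
  moreover have "c * (\<Sum>a=1..M. \<Sum>i=1..n. P a i j * \<theta> a i) - (\<Sum>a=1..M. \<theta> a j) = - m j"
    using assms unfolding primal_feasible_def by blast
  ultimately show ?thesis by linarith
qed

lemma total_flow_pos:
  assumes "primal_feasible M n P c m \<theta>" "0 \<le> c" "j \<in> {1..n}"
  shows "0 < (\<Sum>a=1..M. \<theta> a j)"
  using m_le_total_flow[OF assms] m_pos[OF assms(3)] by linarith

lemma exists_action_with_pos_flow:
  assumes "primal_feasible M n P c m \<theta>" "0 \<le> c" "j \<in> {1..n}"
  obtains a where "a \<in> {1..M}" "0 < \<theta> a j"
proof -
  have "0 < (\<Sum>a=1..M. \<theta> a j)"
    using total_flow_pos[OF assms] .
  then show ?thesis
    using that sum_nonpos[of "{1..M}" "\<lambda>a. \<theta> a j"] by (meson not_le)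
qed

lemma complementary_slackness:
  assumes \<theta>: "primal_feasible M n P \<gamma> m \<theta>" and V: "dual_feasible M n P Ga \<gamma> V"
    and obj: "primal_obj M n Ga \<theta> = (\<Sum>j=1..n. m j * V j)"
    and "a \<in> {1..M}" "j \<in> {1..n}"
  shows "\<theta> a j * reduced_cost V a j = 0"
proof -
  have nonneg: "0 \<le> \<theta> a j * reduced_cost V a j" if "a \<in> {1..M}" "j \<in> {1..n}" for a j
    using \<theta> V that unfolding dual_feasible_iff_reduced_cost_nonneg primal_feasible_def by simp
  have "(\<Sum>a=1..M. \<Sum>j=1..n. \<theta> a j * reduced_cost V a j) = 0"
    using primal_obj_eq_lagrangian[OF \<theta>, of V] obj by simp
  then have "\<forall>a\<in>{1..M}. (\<Sum>j=1..n. \<theta> a j * reduced_cost V a j) = 0"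
    using nonneg by (subst (asm) sum_nonneg_eq_0_iff) (auto intro!: sum_nonneg)
  then show ?thesis
    using assms(4,5) nonneg sum_nonneg_eq_0_iff[of "{1..n}" "\<lambda>j. \<theta> a j * reduced_cost V a j"] by auto
qed

\<comment> \<open>Deterministic stationary policies, taken extensional so that there are finitely many.\<close>
abbreviation policies :: "(nat \<Rightarrow> nat) set" where
  "policies \<equiv> {1..n} \<rightarrow>\<^sub>E {1..M}"

definition is_occupation :: "(nat \<Rightarrow> nat) \<Rightarrow> (nat \<Rightarrow> real) \<Rightarrow> bool" where
  "is_occupation \<sigma> x \<longleftrightarrow> (\<forall>j\<in>{1..n}. 0 \<le> x j \<and> x j = m j + \<gamma> * (\<Sum>i=1..n. P (\<sigma> i) i j * x i))"

lemma occupation_nonneg: "is_occupation \<sigma> x \<Longrightarrow> j \<in> {1..n} \<Longrightarrow> 0 \<le> x j"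
  and occupation_eq: "is_occupation \<sigma> x \<Longrightarrow> j \<in> {1..n} \<Longrightarrow> x j = m j + \<gamma> * (\<Sum>i=1..n. P (\<sigma> i) i j * x i)"
  unfolding is_occupation_def by blast+

definition is_policy_value :: "(nat \<Rightarrow> nat) \<Rightarrow> (nat \<Rightarrow> real) \<Rightarrow> bool" where
  "is_policy_value \<sigma> V \<longleftrightarrow> (\<forall>j\<in>{1..n}. 0 \<le> V j \<and> reduced_cost V (\<sigma> j) j = 0)"

definition deterministic_flow :: "(nat \<Rightarrow> nat) \<Rightarrow> (nat \<Rightarrow> real) \<Rightarrow> nat \<Rightarrow> nat \<Rightarrow> real" where
  "deterministic_flow \<sigma> x a j = (if a = \<sigma> j then x j else 0)"

lemma sum_actions_deterministic_flow:
  assumes "\<sigma> \<in> policies" "j \<in> {1..n}"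
  shows "(\<Sum>a=1..M. deterministic_flow \<sigma> x a j * r a) = x j * r (\<sigma> j)"
  using assms by (auto simp: deterministic_flow_def if_distrib if_distribR sum.delta cong: if_cong)

lemma sum_deterministic_flow:
  assumes "\<sigma> \<in> policies"
  shows "(\<Sum>a=1..M. \<Sum>j=1..n. deterministic_flow \<sigma> x a j * r a j) = (\<Sum>j=1..n. x j * r (\<sigma> j) j)"
  using sum_actions_deterministic_flow[OF assms] by (subst sum.swap) simp

lemma occupation_ge_m:
  assumes "\<sigma> \<in> policies" "is_occupation \<sigma> x" "j \<in> {1..n}"
  shows "m j \<le> x j"
proof -
  have "0 \<le> (\<Sum>i=1..n. P (\<sigma> i) i j * x i)"
    using assms P_nonneg PiE_mem[OF assms(1)] occupation_nonneg
    by (intro sum_nonneg mult_nonneg_nonneg) auto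
  then show ?thesis
    using occupation_eq[OF assms(2,3)] \<gamma>_nonneg by (simp add: mult_nonneg_nonneg)
qed

lemma primal_feasible_deterministic_flow:
  assumes "\<sigma> \<in> policies" "is_occupation \<sigma> x"
  shows "primal_feasible M n P \<gamma> m (deterministic_flow \<sigma> x)"
  unfolding primal_feasible_def
proof (intro conjI ballI)
  fix a j assume "a \<in> {1..M}" "j \<in> {1..n}"
  then show "0 \<le> deterministic_flow \<sigma> x a j"
    using occupation_nonneg[OF assms(2)] by (simp add: deterministic_flow_def)
next
  fix j assume j: "j \<in> {1..n}"
  have total: "(\<Sum>a=1..M. deterministic_flow \<sigma> x a j) = x j"
    using sum_actions_deterministic_flow[OF assms(1) j, of x "\<lambda>_. 1"] by simp
  have inflow: "(\<Sum>a=1..M. \<Sum>i=1..n. P a i j * deterministic_flow \<sigma> x a i) = (\<Sum>i=1..n. P (\<sigma> i) i j * x i)"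
    using sum_deterministic_flow[OF assms(1), of x "\<lambda>a i. P a i j"] by (simp add: mult.commute)
  show "\<gamma> * (\<Sum>a=1..M. \<Sum>i=1..n. P a i j * deterministic_flow \<sigma> x a i)
      - (\<Sum>a=1..M. deterministic_flow \<sigma> x a j) = - m j"
    unfolding total inflow using occupation_eq[OF assms(2) j] by linarith
qed

lemma primal_obj_deterministic_flow:
  assumes "\<sigma> \<in> policies" "is_occupation \<sigma> x"
  shows "primal_obj M n Ga (deterministic_flow \<sigma> x)
    = (\<Sum>j=1..n. m j * V j) + (\<Sum>j=1..n. x j * reduced_cost V (\<sigma> j) j)"
  using primal_obj_eq_lagrangian[OF primal_feasible_deterministic_flow[OF assms], of V]
    sum_deterministic_flow[OF assms(1), of x "reduced_cost V"]
  by linarith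

lemma primal_obj_deterministic_flow_eq_value:
  assumes "\<sigma> \<in> policies" "is_occupation \<sigma> x" "is_policy_value \<sigma> V"
  shows "primal_obj M n Ga (deterministic_flow \<sigma> x) = (\<Sum>j=1..n. m j * V j)"
  using primal_obj_deterministic_flow[OF assms(1,2), of V] assms(3)
  unfolding is_policy_value_def by simp

lemma value_exists_if_occupation:
  assumes \<sigma>: "\<sigma> \<in> policies" and x: "is_occupation \<sigma> x"
  obtains V where "is_policy_value \<sigma> V"
proof -
  obtain V where V: "\<forall>j\<in>{1..n}. 0 \<le> V j \<and> V j = Ga (\<sigma> j) j + (\<Sum>i\<in>{1..n}. \<gamma> * P (\<sigma> j) j i * V i)"
  proof (atomize_elim, rule nonneg_linear_fixpoint_if_excessive[where Q = "\<lambda>j i. \<gamma> * P (\<sigma> j) j i"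
        and b = "\<lambda>j. Ga (\<sigma> j) j" and w = x and g = m])
    show "m k + (\<Sum>i\<in>{1..n}. \<gamma> * P (\<sigma> i) i k * x i) \<le> x k" if "k \<in> {1..n}" for k
      using occupation_eq[OF x that] by (simp add: sum_distrib_left mult.assoc)
  qed (use PiE_mem[OF \<sigma>] P_nonneg Ga_pos m_pos occupation_nonneg[OF x] \<gamma>_nonneg
       in \<open>auto intro: less_imp_le\<close>)
  have scale: "(\<Sum>i\<in>{1..n}. \<gamma> * P (\<sigma> j) j i * V i) = \<gamma> * (\<Sum>i=1..n. P (\<sigma> j) j i * V i)" for j
    by (simp add: sum_distrib_left mult.assoc)
  have "is_policy_value \<sigma> V"
    unfolding is_policy_value_def
  proof
    fix j assume "j \<in> {1..n}"
    then have "0 \<le> V j" "V j = Ga (\<sigma> j) j + \<gamma> * (\<Sum>i=1..n. P (\<sigma> j) j i * V i)"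
      using V unfolding scale by blast+
    then show "0 \<le> V j \<and> reduced_cost V (\<sigma> j) j = 0"
      unfolding reduced_cost_def by (intro conjI) linarith+
  qed
  then show ?thesis by (rule that)
qed

lemma occupation_exists_if_excessive:
  assumes \<sigma>: "\<sigma> \<in> policies" and W_nonneg: "\<And>j. j \<in> {1..n} \<Longrightarrow> 0 \<le> W j"
    and excessive: "\<And>j. j \<in> {1..n} \<Longrightarrow> reduced_cost W (\<sigma> j) j \<le> 0"
  obtains x where "is_occupation \<sigma> x"
proof -
  obtain x where x: "\<forall>j\<in>{1..n}. 0 \<le> x j \<and> x j = m j + (\<Sum>i\<in>{1..n}. \<gamma> * P (\<sigma> i) i j * x i)"
  proof (atomize_elim, rule nonneg_linear_fixpoint_if_excessive[where Q = "\<lambda>j i. \<gamma> * P (\<sigma> i) i j"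
        and b = m and w = W and g = "\<lambda>j. Ga (\<sigma> j) j"])
    show "Ga (\<sigma> k) k + (\<Sum>i\<in>{1..n}. \<gamma> * P (\<sigma> k) k i * W i) \<le> W k" if "k \<in> {1..n}" for k
      using excessive[OF that] unfolding reduced_cost_def by (simp add: sum_distrib_left mult.assoc)
  qed (use PiE_mem[OF \<sigma>] P_nonneg Ga_pos m_pos W_nonneg \<gamma>_nonneg in \<open>auto intro: less_imp_le\<close>)
  have scale: "(\<Sum>i\<in>{1..n}. \<gamma> * P (\<sigma> i) i j * x i) = \<gamma> * (\<Sum>i=1..n. P (\<sigma> i) i j * x i)" for j
    by (simp add: sum_distrib_left mult.assoc)
  have "is_occupation \<sigma> x"
    using x unfolding is_occupation_def scale by blast
  then show ?thesis by (rule that)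
qed

lemma randomized_value_exists:
  assumes "0 \<le> \<gamma>'" and \<theta>: "primal_feasible M n P \<gamma>' m \<theta>"
  obtains V where "\<And>j. j \<in> {1..n} \<Longrightarrow> 0 \<le> V j"
    and "\<And>j. j \<in> {1..n} \<Longrightarrow>
      (\<Sum>a=1..M. \<theta> a j) * V j = (\<Sum>a=1..M. \<theta> a j * (Ga a j + \<gamma>' * (\<Sum>i=1..n. P a j i * V i)))"
proof -
  define R where "R j i = \<gamma>' * (\<Sum>a=1..M. \<theta> a j * P a j i)" for j i
  have regroup: "(\<Sum>a=1..M. \<theta> a j * Ga a j) + (\<Sum>i\<in>{1..n}. R j i * V i)
      = (\<Sum>a=1..M. \<theta> a j * (Ga a j + \<gamma>' * (\<Sum>i=1..n. P a j i * V i)))" for j V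
    unfolding R_def distrib_left sum.distrib sum_distrib_left sum_distrib_right
    by (subst (2) sum.swap) (simp add: mult_ac)
  have "\<exists>V. \<forall>j\<in>{1..n}. 0 \<le> V j
      \<and> (\<Sum>a=1..M. \<theta> a j) * V j = (\<Sum>a=1..M. \<theta> a j * Ga a j) + (\<Sum>i\<in>{1..n}. R j i * V i)"
  proof (rule nonneg_scaled_linear_fixpoint_if_excessive[where g = m])
    show "m k + (\<Sum>j\<in>{1..n}. R j k) \<le> (\<Sum>a=1..M. \<theta> a k)" if "k \<in> {1..n}" for k
    proof -
      have "(\<Sum>j\<in>{1..n}. R j k) = \<gamma>' * (\<Sum>a=1..M. \<Sum>i=1..n. P a i k * \<theta> a i)"
        unfolding R_def sum_distrib_left[symmetric] by (subst sum.swap) (simp add: mult.commute)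
      then show ?thesis
        using \<theta> that unfolding primal_feasible_def by force
    qed
  qed (use primal_feasible_nonneg[OF \<theta>] P_nonneg Ga_pos[THEN less_imp_le] assms(1)
         total_flow_pos[OF \<theta> assms(1)] m_pos
       in \<open>auto simp: R_def intro!: sum_nonneg mult_nonneg_nonneg\<close>)
  then show ?thesis
    using that unfolding regroup by blast
qed

lemma greedy_policy_exists:
  fixes h :: "nat \<Rightarrow> nat \<Rightarrow> real"
  assumes "0 < n \<Longrightarrow> 0 < M"
  obtains \<sigma> where "\<sigma> \<in> policies" "\<And>a j. a \<in> {1..M} \<Longrightarrow> j \<in> {1..n} \<Longrightarrow> h (\<sigma> j) j \<le> h a j"
proof -
  have "\<exists>a\<in>{1..M}. \<forall>a'\<in>{1..M}. h a j \<le> h a' j" if "j \<in> {1..n}" for j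
    using arg_min_if_finite(1)[of "{1..M}" "\<lambda>a. h a j"] arg_min_least[of "{1..M}" _ "\<lambda>a. h a j"]
      assms that by fastforce
  then obtain \<tau> where "\<forall>j\<in>{1..n}. \<tau> j \<in> {1..M} \<and> (\<forall>a\<in>{1..M}. h (\<tau> j) j \<le> h a j)"
    by metis
  then show ?thesis
    using that[of "restrict \<tau> {1..n}"] by auto
qed

lemma occupation_exists_if_feasible:
  assumes "\<gamma> \<le> \<gamma>'" and \<theta>: "primal_feasible M n P \<gamma>' m \<theta>"
  obtains \<sigma> x where "\<sigma> \<in> policies" "is_occupation \<sigma> x"
proof -
  have "0 \<le> \<gamma>'" using \<gamma>_nonneg assms(1) by linarith
  obtain V where V_nonneg: "\<And>j. j \<in> {1..n} \<Longrightarrow> 0 \<le> V j"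
    and V_eq: "\<And>j. j \<in> {1..n} \<Longrightarrow>
      (\<Sum>a=1..M. \<theta> a j) * V j = (\<Sum>a=1..M. \<theta> a j * (Ga a j + \<gamma>' * (\<Sum>i=1..n. P a j i * V i)))"
    using randomized_value_exists[OF \<open>0 \<le> \<gamma>'\<close> \<theta>] by blast
  define h where "h a j = Ga a j + \<gamma> * (\<Sum>i=1..n. P a j i * V i)" for a j
  have actions: "0 < M" if "0 < n"
    using exists_action_with_pos_flow[OF \<theta> \<open>0 \<le> \<gamma>'\<close>, of 1] that by fastforce
  obtain \<sigma> where \<sigma>: "\<sigma> \<in> policies"
    and greedy: "\<And>a j. a \<in> {1..M} \<Longrightarrow> j \<in> {1..n} \<Longrightarrow> h (\<sigma> j) j \<le> h a j"
    using greedy_policy_exists[where h = h, OF actions] by blast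
  have "reduced_cost V (\<sigma> j) j \<le> 0" if j: "j \<in> {1..n}" for j
  proof -
    have "h a j \<le> Ga a j + \<gamma>' * (\<Sum>i=1..n. P a j i * V i)" if "a \<in> {1..M}" for a
    proof -
      have "0 \<le> (\<Sum>i=1..n. P a j i * V i)"
        using that j P_nonneg V_nonneg by (auto intro!: sum_nonneg mult_nonneg_nonneg)
      then show ?thesis
        unfolding h_def using assms(1) by (simp add: mult_right_mono)
    qed
    then have "(\<Sum>a=1..M. \<theta> a j) * h (\<sigma> j) j \<le> (\<Sum>a=1..M. \<theta> a j * (Ga a j + \<gamma>' * (\<Sum>i=1..n. P a j i * V i)))"
      unfolding sum_distrib_right using greedy j primal_feasible_nonneg[OF \<theta> _ j]
      by (intro sum_mono mult_left_mono order.trans[OF greedy]) auto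
    then have "(\<Sum>a=1..M. \<theta> a j) * h (\<sigma> j) j \<le> (\<Sum>a=1..M. \<theta> a j) * V j"
      using V_eq[OF j] by linarith
    then have "h (\<sigma> j) j \<le> V j"
      using total_flow_pos[OF \<theta> \<open>0 \<le> \<gamma>'\<close> j] by (rule mult_left_le_imp_le)
    then show ?thesis
      unfolding reduced_cost_def h_def by simp
  qed
  then obtain x where "is_occupation \<sigma> x"
    using occupation_exists_if_excessive[where W = V, OF \<sigma> V_nonneg] by blast
  with \<sigma> show ?thesis by (rule that)
qed

lemma dual_feasible_if_value_minimal:
  assumes \<sigma>: "\<sigma> \<in> policies" and V: "is_policy_value \<sigma> V"
    and minimal: "\<And>\<sigma>' x'. \<sigma>' \<in> policies \<Longrightarrow> is_occupation \<sigma>' x' \<Longrightarrow>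
      (\<Sum>j=1..n. m j * V j) \<le> primal_obj M n Ga (deterministic_flow \<sigma>' x')"
  shows "dual_feasible M n P Ga \<gamma> V"
  unfolding dual_feasible_iff_reduced_cost_nonneg
proof (intro ballI, rule ccontr)
  fix a j assume a: "a \<in> {1..M}" and j: "j \<in> {1..n}" and neg: "\<not> 0 \<le> reduced_cost V a j"
  have V_nonneg: "\<And>k. k \<in> {1..n} \<Longrightarrow> 0 \<le> V k"
    and V_tight: "\<And>k. k \<in> {1..n} \<Longrightarrow> reduced_cost V (\<sigma> k) k = 0"
    using V unfolding is_policy_value_def by auto
  define \<sigma>' where "\<sigma>' = \<sigma>(j := a)"
  have \<sigma>': "\<sigma>' \<in> policies"
    using \<sigma> a j by (auto simp: \<sigma>'_def PiE_iff extensional_def)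
  have "reduced_cost V (\<sigma>' k) k \<le> 0" if "k \<in> {1..n}" for k
    using neg V_tight[OF that] by (cases "k = j") (auto simp: \<sigma>'_def)
  then obtain x' where x': "is_occupation \<sigma>' x'"
    using occupation_exists_if_excessive[where W = V, OF \<sigma>' V_nonneg] by blast
  have "(\<Sum>k=1..n. x' k * reduced_cost V (\<sigma>' k) k) = (\<Sum>k=1..n. if k = j then x' j * reduced_cost V a j else 0)"
    using V_tight by (intro sum.cong) (auto simp: \<sigma>'_def)
  also have "\<dots> = x' j * reduced_cost V a j"
    using j by simp
  also have "\<dots> < 0"
    using occupation_ge_m[OF \<sigma>' x' j] m_pos[OF j] neg by (simp add: mult_pos_neg)
  finally have "primal_obj M n Ga (deterministic_flow \<sigma>' x') < (\<Sum>j=1..n. m j * V j)"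
    using primal_obj_deterministic_flow[OF \<sigma>' x', of V] by linarith
  with minimal[OF \<sigma>' x'] show False by linarith
qed

lemma least_cost_policy_exists:
  assumes "\<gamma> \<le> \<gamma>'" "primal_feasible M n P \<gamma>' m \<theta>"
  obtains \<sigma> x V where "\<sigma> \<in> policies" "is_occupation \<sigma> x" "is_policy_value \<sigma> V"
    and "\<And>\<sigma>' x'. \<sigma>' \<in> policies \<Longrightarrow> is_occupation \<sigma>' x' \<Longrightarrow>
      (\<Sum>j=1..n. m j * V j) \<le> primal_obj M n Ga (deterministic_flow \<sigma>' x')"
proof -
  define admissible where "admissible = {\<sigma> \<in> policies. \<exists>x. is_occupation \<sigma> x}"
  define value_of where "value_of \<sigma> = (SOME V. is_policy_value \<sigma> V)" for \<sigma>
  define cost where "cost \<sigma> = (\<Sum>j=1..n. m j * value_of \<sigma> j)" for \<sigma>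
  have value_of: "is_policy_value \<sigma> (value_of \<sigma>)" if admissible: "\<sigma> \<in> admissible" for \<sigma>
  proof -
    obtain x where "\<sigma> \<in> policies" "is_occupation \<sigma> x"
      using admissible unfolding admissible_def by blast
    then obtain V where "is_policy_value \<sigma> V"
      by (rule value_exists_if_occupation)
    then show ?thesis
      unfolding value_of_def by (rule someI[where P = "is_policy_value \<sigma>"])
  qed
  have finite: "finite admissible"
    unfolding admissible_def by (rule finite_subset[of _ policies]) (auto intro: finite_PiE)
  obtain \<sigma>\<^sub>0 x\<^sub>0 where "\<sigma>\<^sub>0 \<in> policies" "is_occupation \<sigma>\<^sub>0 x\<^sub>0"
    by (rule occupation_exists_if_feasible[OF assms])
  then have nonempty: "admissible \<noteq> {}"
    unfolding admissible_def by blast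
  define \<sigma> where "\<sigma> = arg_min_on cost admissible"
  have \<sigma>: "\<sigma> \<in> admissible"
    unfolding \<sigma>_def by (rule arg_min_if_finite(1)[OF finite nonempty])
  then obtain x where \<sigma>_policy: "\<sigma> \<in> policies" and x: "is_occupation \<sigma> x"
    unfolding admissible_def by blast
  show ?thesis
  proof (rule that[OF \<sigma>_policy x value_of[OF \<sigma>]])
    fix \<sigma>' x' assume \<sigma>': "\<sigma>' \<in> policies" and x': "is_occupation \<sigma>' x'"
    then have admissible': "\<sigma>' \<in> admissible"
      unfolding admissible_def by blast
    have "cost \<sigma> \<le> cost \<sigma>'"
      unfolding \<sigma>_def by (rule arg_min_least[OF finite nonempty admissible'])
    then show "(\<Sum>j=1..n. m j * value_of \<sigma> j) \<le> primal_obj M n Ga (deterministic_flow \<sigma>' x')"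
      using primal_obj_deterministic_flow_eq_value[OF \<sigma>' x' value_of[OF admissible']]
      unfolding cost_def by linarith
  qed
qed

theorem deterministic_strong_duality:
  assumes "\<gamma> \<le> \<gamma>'" "primal_feasible M n P \<gamma>' m \<theta>"
  obtains \<sigma> x V where "\<sigma> \<in> policies" "is_occupation \<sigma> x" "dual_feasible M n P Ga \<gamma> V"
    and "primal_obj M n Ga (deterministic_flow \<sigma> x) = (\<Sum>j=1..n. m j * V j)"
proof -
  obtain \<sigma> x V where \<sigma>: "\<sigma> \<in> policies" and x: "is_occupation \<sigma> x" and V: "is_policy_value \<sigma> V"
    and least: "\<And>\<sigma>' x'. \<sigma>' \<in> policies \<Longrightarrow> is_occupation \<sigma>' x' \<Longrightarrow>
      (\<Sum>j=1..n. m j * V j) \<le> primal_obj M n Ga (deterministic_flow \<sigma>' x')"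
    by (rule least_cost_policy_exists[OF assms]) blast
  show ?thesis
    using that[OF \<sigma> x dual_feasible_if_value_minimal[OF \<sigma> V least]]
      primal_obj_deterministic_flow_eq_value[OF \<sigma> x V] by blast
qed

lemma deterministic_flow_unique_action:
  assumes "\<sigma> \<in> policies" "is_occupation \<sigma> x" "j \<in> {1..n}"
  shows "\<exists>!a. a \<in> {1..M} \<and> 0 < deterministic_flow \<sigma> x a j
    \<and> (\<forall>a'\<in>{1..M}. a' \<noteq> a \<longrightarrow> deterministic_flow \<sigma> x a' j = 0)"
proof (rule ex1I[of _ "\<sigma> j"])
  have "0 < x j"
    using occupation_ge_m[OF assms] m_pos[OF assms(3)] by linarith
  then show "\<sigma> j \<in> {1..M} \<and> 0 < deterministic_flow \<sigma> x (\<sigma> j) j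
      \<and> (\<forall>a'\<in>{1..M}. a' \<noteq> \<sigma> j \<longrightarrow> deterministic_flow \<sigma> x a' j = 0)"
    using PiE_mem[OF assms(1,3)] by (simp add: deterministic_flow_def)
qed (auto simp: deterministic_flow_def split: if_splits)

lemma exists_tight_action:
  assumes "primal_solution M n P Ga \<gamma> m \<theta>" "dual_solution M n P Ga \<gamma> m V"
    and "primal_feasible M n P \<gamma> m \<theta>'" "dual_feasible M n P Ga \<gamma> V'"
    and "primal_obj M n Ga \<theta>' = (\<Sum>j=1..n. m j * V' j)"
    and j: "j \<in> {1..n}"
  shows "\<exists>a\<in>{1..M}. V j = \<gamma> * (\<Sum>i=1..n. P a j i * V i) + Ga a j \<and> 0 < \<theta> a j"
proof -
  have \<theta>: "primal_feasible M n P \<gamma> m \<theta>" and V: "dual_feasible M n P Ga \<gamma> V"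
    using assms(1,2) unfolding primal_solution_def dual_solution_def by auto
  obtain a where a: "a \<in> {1..M}" "0 < \<theta> a j"
    using exists_action_with_pos_flow[OF \<theta> \<gamma>_nonneg j] by blast
  have "reduced_cost V a j = 0"
    using complementary_slackness[OF \<theta> V objectives_agree_if_solutions[OF assms(1-5)] a(1) j] a(2) by simp
  then show ?thesis
    using a unfolding reduced_cost_def by (intro bexI[OF _ a(1)]) auto
qed

theorem solutions_exist_with_structure:
  assumes "\<gamma> \<le> \<gamma>'" "primal_feasible M n P \<gamma>' m \<theta>"
  shows "(\<exists>\<theta>. primal_solution M n P Ga \<gamma> m \<theta>) \<and> (\<exists>V. dual_solution M n P Ga \<gamma> m V) \<and>
    (\<forall>\<theta> V. primal_solution M n P Ga \<gamma> m \<theta> \<longrightarrow> dual_solution M n P Ga \<gamma> m V \<longrightarrow>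
       (\<forall>j\<in>{1..n}. \<exists>a\<in>{1..M}. V j = \<gamma> * (\<Sum>i=1..n. P a j i * V i) + Ga a j \<and> 0 < \<theta> a j)) \<and>
    (\<exists>\<theta>'. primal_solution M n P Ga \<gamma> m \<theta>' \<and>
       (\<forall>j\<in>{1..n}. \<exists>!a. a \<in> {1..M} \<and> 0 < \<theta>' a j \<and> (\<forall>a'\<in>{1..M}. a' \<noteq> a \<longrightarrow> \<theta>' a' j = 0)))"
proof -
  obtain \<sigma> x V where \<sigma>: "\<sigma> \<in> policies" and x: "is_occupation \<sigma> x"
    and V: "dual_feasible M n P Ga \<gamma> V"
    and obj: "primal_obj M n Ga (deterministic_flow \<sigma> x) = (\<Sum>j=1..n. m j * V j)"
    using deterministic_strong_duality[OF assms] by blast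
  have \<theta>: "primal_feasible M n P \<gamma> m (deterministic_flow \<sigma> x)"
    using primal_feasible_deterministic_flow[OF \<sigma> x] .
  show ?thesis
    using solutions_if_objectives_agree[OF \<theta> V obj] exists_tight_action[OF _ _ \<theta> V obj]
      deterministic_flow_unique_action[OF \<sigma> x] by blast
qed

end

theorem lemma2:
  fixes X :: "'x::euclidean_space set"
    and D :: "nat \<Rightarrow> 'x set"
    and T :: "'x \<Rightarrow> 'u \<Rightarrow> 'e \<Rightarrow> 'x"
    and u :: "nat \<Rightarrow> 'u" and \<xi> :: "nat \<Rightarrow> 'e" and v :: "nat \<Rightarrow> real"
    and G :: "nat \<Rightarrow> nat \<Rightarrow> nat \<Rightarrow> real" and m :: "nat \<Rightarrow> real"
    and N M L :: nat
  assumes X_compact: "compact X"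
    and D_meas: "\<forall>i\<in>{1..N}. D i \<in> sets lebesgue"
    and D_disj: "\<forall>i\<in>{1..N}. \<forall>j\<in>{1..N}. i \<noteq> j \<longrightarrow> D i \<inter> D j = {}"
    and D_cover: "(\<Union>i\<in>{1..N}. D i) = X"
    and T_maps: "\<forall>x\<in>X. \<forall>a\<in>{1..M}. \<forall>l\<in>{1..L}. T x (u a) (\<xi> l) \<in> X"
    and v_nonneg: "\<forall>l\<in>{1..L}. 0 \<le> v l"
    and v_sum: "(\<Sum>l = 1..L. v l) = 1"
    and feas: "\<exists>\<gamma>>1. \<exists>\<theta>. primal_feasible M (N - 1) (markov_a T D u \<xi> v L) \<gamma> m \<theta>"
    and m_pos: "\<forall>j\<in>{1..N - 1}. 0 < m j"
    and G_pos: "\<forall>a\<in>{1..M}. \<forall>j\<in>{1..N - 1}. 0 < cost_a G v L a j"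
  shows "\<forall>\<gamma>::real. 1 \<le> \<gamma> \<and>
      ereal \<gamma> < Sup (ereal ` {\<gamma>'. 1 < \<gamma>' \<and>
                   (\<exists>\<theta>. primal_feasible M (N - 1) (markov_a T D u \<xi> v L) \<gamma>' m \<theta>)}) \<longrightarrow>
    (\<exists>\<theta>. primal_solution M (N - 1) (markov_a T D u \<xi> v L) (cost_a G v L) \<gamma> m \<theta>) \<and>
    (\<exists>V. dual_solution M (N - 1) (markov_a T D u \<xi> v L) (cost_a G v L) \<gamma> m V) \<and>
    (\<forall>\<theta> V. primal_solution M (N - 1) (markov_a T D u \<xi> v L) (cost_a G v L) \<gamma> m \<theta> \<longrightarrow>
           dual_solution M (N - 1) (markov_a T D u \<xi> v L) (cost_a G v L) \<gamma> m V \<longrightarrow>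
       (\<forall>j\<in>{1..N - 1}. \<exists>a\<in>{1..M}.
          V j = \<gamma> * (\<Sum>i = 1..N - 1. markov_a T D u \<xi> v L a j i * V i) + cost_a G v L a j
          \<and> 0 < \<theta> a j)) \<and>
    (\<exists>\<theta>'. primal_solution M (N - 1) (markov_a T D u \<xi> v L) (cost_a G v L) \<gamma> m \<theta>' \<and>
       (\<forall>j\<in>{1..N - 1}. \<exists>!a. a \<in> {1..M} \<and> 0 < \<theta>' a j \<and>
          (\<forall>a'\<in>{1..M}. a' \<noteq> a \<longrightarrow> \<theta>' a' j = 0)))"
proof -
  let ?P = "markov_a T D u \<xi> v L"
  have lp: "discounted_lp M (N - 1) ?P (cost_a G v L) m \<gamma>" if "0 \<le> \<gamma>" for \<gamma>
  proof
    show "0 \<le> ?P a i j" for a i j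
      using v_nonneg unfolding markov_a_def markov_al_def
      by (auto intro!: sum_nonneg mult_nonneg_nonneg divide_nonneg_nonneg)
  qed (use G_pos m_pos that in auto)
  show ?thesis (is "\<forall>\<gamma>. ?hyp \<gamma> \<longrightarrow> ?concl \<gamma>")
  proof (intro allI impI)
    fix \<gamma> :: real
    assume "?hyp \<gamma>"
    then obtain \<gamma>' \<theta> where "1 \<le> \<gamma>" "\<gamma> \<le> \<gamma>'" "primal_feasible M (N - 1) ?P \<gamma>' m \<theta>"
      by (auto simp: less_Sup_iff dest!: less_imp_le)
    then show "?concl \<gamma>"
      using discounted_lp.solutions_exist_with_structure[OF lp] by simp
  qed
qed

end
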